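(* For positive integers $p,q$ and an integer $k\ge0$, $$G_{k+3}(p-1,q)+(-1)^kG_{k+3}(q-1,p)=\sum_{a+b=k}(-1)^b\,\zeta(\{1\}^{p-1},a+2)\,\zeta(\{1\}^{q-1},b+2),$$ where the sum is over nonnegative integers $a,b$ with $a+b=k$.
   Context: $\zeta(\alpha_1,\ldots,\alpha_r)=\sum_{1\le k_1<\cdots<k_r}k_1^{-\alpha_1}\cdots k_r^{-\alpha_r}$ for positive integers $\alpha_i$, $\alpha_r\ge2$; $\{a\}^k$ denotes $k$ repetitions of $a$. For nonnegative integers $n,p,q$, $$G_{n+2}(p,q)=\sum_{1\le k_1<\cdots<k_{p+1}}\frac{1}{k_1\cdots k_p\,k_{p+1}^{n+2}}\sum_{1\le \ell_1\le\cdots\le\ell_q\le k_{p+1}}\frac{1}{\ell_1\cdots\ell_q}.$$ *)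

theory Defs
  imports "HOL-Analysis.Analysis"
begin

definition incr_tuples :: "nat \<Rightarrow> nat list set" where
  "incr_tuples r = {ks. length ks = r \<and> sorted_wrt (<) ks \<and> (\<forall>k\<in>set ks. 1 \<le> k)}"

definition mzv :: "nat list \<Rightarrow> real" where
  "mzv alpha = (\<Sum>\<^sub>\<infinity>ks\<in>incr_tuples (length alpha).
      (\<Prod>i<length alpha. 1 / real (ks ! i) ^ (alpha ! i)))"

text \<open>G_s(p,q) (the paper writes s = n+2):
  sum over 1 <= k_1 < ... < k_(p+1) and 1 <= l_1 <= ... <= l_q <= k_(p+1) of
  1/(k_1 ... k_p * k_(p+1)^s * l_1 ... l_q).\<close>

definition G_index :: "nat \<Rightarrow> nat \<Rightarrow> (nat list \<times> nat list) set" where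
  "G_index p q = {(ks, ls). ks \<in> incr_tuples (Suc p) \<and> length ls = q \<and> sorted ls
      \<and> (\<forall>l\<in>set ls. 1 \<le> l \<and> l \<le> last ks)}"

definition G :: "nat \<Rightarrow> nat \<Rightarrow> nat \<Rightarrow> real" where
  "G s p q = (\<Sum>\<^sub>\<infinity>(ks, ls)\<in>G_index p q.
      1 / ((\<Prod>i<p. real (ks ! i)) * real (ks ! p) ^ s * (\<Prod>j<q. real (ls ! j))))"

end

theory Submission
  imports Defs
begin

text \<open>
  Write e_r(n) for the sum of 1/(k_1 ... k_r) over 1 <= k_1 < ... < k_r < n and h_q(n) for the sum
  of 1/(l_1 ... l_q) over 1 <= l_1 <= ... <= l_q <= n. Grouping index tuples by their last entry
  gives zeta({1}^r, s) = sum_n e_r(n)/n^s and G_s(r, q) = sum_n e_r(n) h_q(n)/n^s.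
  The identity sum_m e_q(m)/(m(m+n)) = h_(q+1)(n)/n, proved by induction on q through partial
  fractions and telescoping, turns G_(k+3)(r, t+1) into the double series of
  e_r(n) e_t(m)/(n^(k+2) m (n+m)) over n, m >= 1. Adding (-1)^k times the mirror image of this
  series for G_(k+3)(t, r+1) and expanding
  1/(n^(k+2) m (n+m)) + (-1)^k/(m^(k+2) n (n+m)) = sum_(a+b=k) (-1)^b/(n^(a+2) m^(b+2))
  splits the total into the products zeta({1}^r, a+2) zeta({1}^t, b+2). Every series involved has
  nonnegative terms, which licenses all the rearrangements.
\<close>

lemma has_sum_Sigma_nonneg:
  fixes f :: "'a \<times> 'b \<Rightarrow> real"
  assumes "\<And>x y. x \<in> A \<Longrightarrow> y \<in> B x \<Longrightarrow> 0 \<le> f (x, y)"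
    and "\<And>x. x \<in> A \<Longrightarrow> ((\<lambda>y. f (x, y)) has_sum g x) (B x)"
    and "(g has_sum S) A"
  shows "(f has_sum S) (Sigma A B)"
  using assms by (intro has_sum_SigmaI summable_on_SigmaI[where g = g]) (auto simp: summable_on_def)

lemma has_sum_fibres_nonneg:
  fixes f :: "'a \<Rightarrow> real"
  assumes "\<And>x. x \<in> A \<Longrightarrow> 0 \<le> f x" and "\<And>x. x \<in> A \<Longrightarrow> g x \<in> B"
    and "\<And>y. y \<in> B \<Longrightarrow> (f has_sum s y) {x \<in> A. g x = y}" and "(s has_sum S) B"
  shows "(f has_sum S) A"
proof -
  have "((\<lambda>(y, x). f x) has_sum S) (Sigma B (\<lambda>y. {x \<in> A. g x = y}))"
    using assms by (intro has_sum_Sigma_nonneg) auto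
  moreover have "bij_betw snd (Sigma B (\<lambda>y. {x \<in> A. g x = y})) A"
    by (rule bij_betwI[where g = "\<lambda>x. (g x, x)"]) (use assms(2) in auto)
  ultimately show ?thesis
    by (simp add: has_sum_reindex_bij_betw[symmetric] case_prod_unfold)
qed

lemma has_sum_sum:
  fixes f :: "'i \<Rightarrow> 'a \<Rightarrow> 'b::topological_comm_monoid_add"
  assumes "finite I" and "\<And>i. i \<in> I \<Longrightarrow> (f i has_sum s i) A"
  shows "((\<lambda>x. \<Sum>i\<in>I. f i x) has_sum (\<Sum>i\<in>I. s i)) A"
  using assms by (induction I rule: finite_induct) (auto intro!: has_sum_add)

lemma has_sum_product_nonneg:
  fixes f g :: "_ \<Rightarrow> real"
  assumes "(f has_sum S) A" and "(g has_sum T) B"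
    and "\<And>x. x \<in> A \<Longrightarrow> 0 \<le> f x" and "\<And>y. y \<in> B \<Longrightarrow> 0 \<le> g y"
  shows "((\<lambda>(x, y). f x * g y) has_sum S * T) (A \<times> B)"
  using assms by (intro has_sum_Sigma_nonneg[where g = "\<lambda>x. f x * T"])
    (auto intro: has_sum_cmult_left has_sum_cmult_right)

definition recip_prod :: "nat list \<Rightarrow> real" where
  "recip_prod xs = (\<Prod>i<length xs. 1 / real (xs ! i))"

lemma recip_prod_nonneg: "0 \<le> recip_prod xs"
  unfolding recip_prod_def by (auto intro: prod_nonneg)

lemma recip_prod_snoc: "recip_prod (xs @ [n]) = recip_prod xs / real n"
  by (simp add: recip_prod_def nth_append)

lemma has_sum_snoc_image_iff:
  "(f has_sum S) ((\<lambda>ys. ys @ [n]) ` A) \<longleftrightarrow> ((\<lambda>ys. f (ys @ [n])) has_sum S) A"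
  by (subst has_sum_reindex) (auto intro: inj_onI simp: o_def)

definition incr_tuples_below :: "nat \<Rightarrow> nat \<Rightarrow> nat list set" where
  "incr_tuples_below r n = {ks \<in> incr_tuples r. \<forall>k\<in>set ks. k < n}"

definition sorted_tuples_upto :: "nat \<Rightarrow> nat \<Rightarrow> nat list set" where
  "sorted_tuples_upto q n = {ls. length ls = q \<and> sorted ls \<and> (\<forall>l\<in>set ls. 1 \<le> l \<and> l \<le> n)}"

lemma snoc_in_incr_tuples_iff:
  "ks @ [i] \<in> incr_tuples (Suc r) \<longleftrightarrow> ks \<in> incr_tuples_below r i \<and> 1 \<le> i"
  by (auto simp: incr_tuples_def incr_tuples_below_def sorted_wrt_append)

lemma incr_tuples_SucE:
  assumes "ks \<in> incr_tuples (Suc r)"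
  obtains ys where "ks = ys @ [last ks]" "ys \<in> incr_tuples_below r (last ks)" "1 \<le> last ks"
proof -
  have "ks \<noteq> []"
    using assms by (auto simp: incr_tuples_def)
  then have "ks = butlast ks @ [last ks]"
    by simp
  with assms that show thesis
    by (metis snoc_in_incr_tuples_iff)
qed

lemma incr_tuples_last_eq:
  assumes "1 \<le> i"
  shows "{ks \<in> incr_tuples (Suc r). last ks = i} = (\<lambda>ys. ys @ [i]) ` incr_tuples_below r i"
  using assms by (auto simp: snoc_in_incr_tuples_iff elim: incr_tuples_SucE)

lemma incr_tuples_below_last_eq:
  assumes "1 \<le> i" "i < n"
  shows "{ks \<in> incr_tuples_below (Suc r) n. last ks = i} = (\<lambda>ys. ys @ [i]) ` incr_tuples_below r i"
  using assms
  by (auto simp: incr_tuples_last_eq[symmetric] incr_tuples_below_def snoc_in_incr_tuples_iff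
      elim!: incr_tuples_SucE intro: less_trans)

lemma sorted_tuples_upto_last_eq:
  assumes "1 \<le> l" "l \<le> n"
  shows "{ls \<in> sorted_tuples_upto (Suc q) n. last ls = l} =
    (\<lambda>ys. ys @ [l]) ` sorted_tuples_upto q l"
proof (intro equalityI subsetI)
  fix ls assume "ls \<in> {ls \<in> sorted_tuples_upto (Suc q) n. last ls = l}"
  then have ls: "ls \<in> sorted_tuples_upto (Suc q) n" "last ls = l" by auto
  then have "ls \<noteq> []" by (auto simp: sorted_tuples_upto_def)
  then have snoc: "ls = butlast ls @ [l]"
    using ls(2) append_butlast_last_id by metis
  then have "butlast ls @ [l] \<in> sorted_tuples_upto (Suc q) n"
    using ls(1) by simp
  then have "butlast ls \<in> sorted_tuples_upto q l"
    by (auto simp: sorted_tuples_upto_def sorted_append)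
  with snoc show "ls \<in> (\<lambda>ys. ys @ [l]) ` sorted_tuples_upto q l" by blast
next
  fix ls assume "ls \<in> (\<lambda>ys. ys @ [l]) ` sorted_tuples_upto q l"
  with assms show "ls \<in> {ls \<in> sorted_tuples_upto (Suc q) n. last ls = l}"
    by (auto simp: sorted_tuples_upto_def sorted_append intro: order_trans)
qed

text \<open>The elementary and the complete homogeneous symmetric polynomials of degree r (resp. q)
  in 1, 1/2, ..., 1/(n-1) (resp. 1, 1/2, ..., 1/n): the e_r(n) and h_q(n) above.\<close>

fun e_harm :: "nat \<Rightarrow> nat \<Rightarrow> real" where
  "e_harm 0 n = 1"
| "e_harm (Suc r) n = (\<Sum>i = 1..<n. e_harm r i / real i)"

fun h_harm :: "nat \<Rightarrow> nat \<Rightarrow> real" where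
  "h_harm 0 n = 1"
| "h_harm (Suc q) n = (\<Sum>l = 1..n. h_harm q l / real l)"

lemma e_harm_nonneg: "0 \<le> e_harm r n"
  by (induction r arbitrary: n) (auto intro!: sum_nonneg)

lemma e_harm_has_sum: "(recip_prod has_sum e_harm r n) (incr_tuples_below r n)"
proof (induction r arbitrary: n)
  case 0
  have "incr_tuples_below 0 n = {[]}"
    by (auto simp: incr_tuples_below_def incr_tuples_def)
  then show ?case
    by (simp add: has_sum_finiteI recip_prod_def)
next
  case (Suc r)
  show ?case
  proof (rule has_sum_fibres_nonneg[where g = last and B = "{1..<n}"])
    fix ks assume ks: "ks \<in> incr_tuples_below (Suc r) n"
    then have "last ks \<in> set ks"
      by (auto simp: incr_tuples_below_def incr_tuples_def intro!: last_in_set)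
    with ks show "last ks \<in> {1..<n}"
      by (auto simp: incr_tuples_below_def incr_tuples_def)
  next
    fix i assume "i \<in> {1..<n}"
    then show "(recip_prod has_sum e_harm r i / real i)
        {ks \<in> incr_tuples_below (Suc r) n. last ks = i}"
      by (simp add: incr_tuples_below_last_eq has_sum_snoc_image_iff recip_prod_snoc
          has_sum_divide_const Suc.IH)
  qed (auto simp: recip_prod_nonneg)
qed

lemma h_harm_has_sum: "(recip_prod has_sum h_harm q n) (sorted_tuples_upto q n)"
proof (induction q arbitrary: n)
  case 0
  have "sorted_tuples_upto 0 n = {[]}"
    by (auto simp: sorted_tuples_upto_def)
  then show ?case
    by (simp add: has_sum_finiteI recip_prod_def)
next
  case (Suc q)
  show ?case
  proof (rule has_sum_fibres_nonneg[where g = last and B = "{1..n}"])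
    fix ls assume ls: "ls \<in> sorted_tuples_upto (Suc q) n"
    then have "last ls \<in> set ls"
      by (auto simp: sorted_tuples_upto_def intro!: last_in_set)
    with ls show "last ls \<in> {1..n}"
      by (auto simp: sorted_tuples_upto_def)
  next
    fix l assume "l \<in> {1..n}"
    then show "(recip_prod has_sum h_harm q l / real l)
        {ls \<in> sorted_tuples_upto (Suc q) n. last ls = l}"
      by (simp add: sorted_tuples_upto_last_eq has_sum_snoc_image_iff recip_prod_snoc
          has_sum_divide_const Suc.IH)
  qed (auto simp: recip_prod_nonneg)
qed

text \<open>The summand of zeta({1}^p, s); it is also the factor of the summand of G_s(p, q) that
  depends on k_1, ..., k_(p+1).\<close>

definition mzv_ones_term :: "nat \<Rightarrow> nat \<Rightarrow> nat list \<Rightarrow> real" where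
  "mzv_ones_term p s ks = 1 / ((\<Prod>i<p. real (ks ! i)) * real (ks ! p) ^ s)"

lemma mzv_ones_term_nonneg: "0 \<le> mzv_ones_term p s ks"
  by (simp add: mzv_ones_term_def prod_nonneg)

lemma mzv_ones_term_snoc:
  assumes "length ys = p"
  shows "mzv_ones_term p s (ys @ [n]) = recip_prod ys / real n ^ s"
proof -
  have "(\<Prod>i<p. real ((ys @ [n]) ! i)) = (\<Prod>i<p. real (ys ! i))"
    using assms by (intro prod.cong) (auto simp: nth_append)
  with assms show ?thesis
    by (simp add: mzv_ones_term_def recip_prod_def prod_dividef nth_append)
qed

lemma has_sum_mzv_ones_term_last:
  assumes "1 \<le> n"
  shows "(mzv_ones_term p s has_sum e_harm p n / real n ^ s)
    {ks \<in> incr_tuples (Suc p). last ks = n}"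
proof -
  have "((\<lambda>ys. recip_prod ys / real n ^ s) has_sum e_harm p n / real n ^ s) (incr_tuples_below p n)"
    by (intro has_sum_divide_const e_harm_has_sum)
  then have "((\<lambda>ys. mzv_ones_term p s (ys @ [n])) has_sum e_harm p n / real n ^ s)
      (incr_tuples_below p n)"
    by (subst has_sum_cong) (auto simp: mzv_ones_term_snoc incr_tuples_below_def incr_tuples_def)
  with assms show ?thesis
    by (simp add: incr_tuples_last_eq has_sum_snoc_image_iff)
qed

lemma G_eqI:
  assumes "((\<lambda>n. e_harm p n * h_harm q n / real n ^ s) has_sum S) {1..}"
  shows "G s p q = S"
proof -
  define f where "f = (\<lambda>(ks, ls). mzv_ones_term p s ks * recip_prod ls)"
  have f_sum: "(f has_sum S) (G_index p q)"
  proof (rule has_sum_fibres_nonneg[where g = "\<lambda>(ks, ls). last ks" and B = "{1..}"])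
    fix n :: nat assume "n \<in> {1..}"
    then have "(f has_sum e_harm p n / real n ^ s * h_harm q n)
        ({ks \<in> incr_tuples (Suc p). last ks = n} \<times> sorted_tuples_upto q n)"
      unfolding f_def
      by (intro has_sum_product_nonneg has_sum_mzv_ones_term_last h_harm_has_sum
          mzv_ones_term_nonneg recip_prod_nonneg) simp
    moreover have "{x \<in> G_index p q. (case x of (ks, ls) \<Rightarrow> last ks) = n} =
        {ks \<in> incr_tuples (Suc p). last ks = n} \<times> sorted_tuples_upto q n"
      by (auto simp: G_index_def sorted_tuples_upto_def)
    ultimately show "(f has_sum e_harm p n * h_harm q n / real n ^ s)
        {x \<in> G_index p q. (case x of (ks, ls) \<Rightarrow> last ks) = n}"
      by simp
  qed (use assms in \<open>auto simp: f_def G_index_def mzv_ones_term_nonneg recip_prod_nonneg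
        elim: incr_tuples_SucE\<close>)
  have f_eq: "f x = (case x of (ks, ls) \<Rightarrow>
      1 / ((\<Prod>i<p. real (ks ! i)) * real (ks ! p) ^ s * (\<Prod>j<q. real (ls ! j))))"
    if "x \<in> G_index p q" for x
    using that by (auto simp: f_def mzv_ones_term_def recip_prod_def prod_dividef G_index_def)
  have "((\<lambda>(ks, ls). 1 / ((\<Prod>i<p. real (ks ! i)) * real (ks ! p) ^ s * (\<Prod>j<q. real (ls ! j))))
      has_sum S) (G_index p q)"
    using f_sum by (rule has_sum_cong[THEN iffD1, rotated]) (rule f_eq)
  then show ?thesis
    unfolding G_def by (rule infsumI)
qed

lemma mzv_ones_eq_G: "mzv (replicate r 1 @ [s]) = G s r 0"
proof -
  have "G_index r 0 = (\<lambda>ks. (ks, [])) ` incr_tuples (Suc r)"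
    by (auto simp: G_index_def)
  moreover have "(\<Prod>i<Suc r. 1 / real (ks ! i) ^ ((replicate r 1 @ [s]) ! i)) =
      1 / ((\<Prod>i<r. real (ks ! i)) * real (ks ! r) ^ s)" for ks
    by (simp add: nth_append prod_dividef)
  ultimately show ?thesis
    unfolding mzv_def G_def by (simp add: infsum_reindex inj_on_def o_def)
qed

lemma mzv_ones_eqI:
  assumes "((\<lambda>n. e_harm r n / real n ^ s) has_sum S) {1..}"
  shows "mzv (replicate r 1 @ [s]) = S"
  unfolding mzv_ones_eq_G by (rule G_eqI) (use assms in simp)

lemma has_sum_telescoping_tail:
  "((\<lambda>m. 1 / (real (m + j) * real (m + j + 1))) has_sum 1 / real (i + j + 1)) {i<..}"
proof -
  define f where "f k = 1 / real (k + (i + j + 1))" for k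
  have "f \<longlonglongrightarrow> 0"
    unfolding f_def by (rule LIMSEQ_ignore_initial_segment[OF lim_inverse_n'])
  then have "(\<lambda>k. f k - f (Suc k)) sums (f 0 - 0)"
    by (rule telescope_sums')
  moreover have "f k - f (Suc k) = 1 / (real (i + 1 + k + j) * real (i + 1 + k + j + 1))" for k
    by (simp add: f_def field_simps)
  ultimately have "((\<lambda>k. 1 / (real (i + 1 + k + j) * real (i + 1 + k + j + 1)))
      has_sum 1 / real (i + j + 1)) UNIV"
    by (intro sums_nonneg_imp_has_sum) (simp_all add: f_def add.commute)
  also have "?this \<longleftrightarrow> ?thesis"
    by (rule has_sum_reindex_bij_witness[where i = "\<lambda>m. m - i - 1" and j = "\<lambda>k. i + 1 + k"]) auto
  finally show ?thesis .
qed

lemma sum_consecutive_recip: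
  assumes "1 \<le> m"
  shows "(\<Sum>j<n. 1 / (real (m + j) * real (m + j + 1))) = real n / (real m * real (m + n))"
proof -
  have "1 / (real (m + j) * real (m + j + 1)) = 1 / real (m + j) - 1 / real (m + Suc j)" for j
    using assms by (simp add: field_simps)
  then have "(\<Sum>j<n. 1 / (real (m + j) * real (m + j + 1))) =
      (\<Sum>j<n. 1 / real (m + j) - 1 / real (m + Suc j))"
    by (simp only:)
  also have "\<dots> = 1 / real m - 1 / real (m + n)"
    by (subst sum_lessThan_telescope') simp
  finally show ?thesis
    using assms by (simp add: field_simps)
qed

lemma has_sum_e_harm_div_mult_add_of_consecutive:
  assumes consecutive: "\<And>j. ((\<lambda>m. e_harm q m / (real (m + j) * real (m + j + 1)))
      has_sum h_harm q (Suc j) / real (Suc j)) {1..}"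
    and n: "1 \<le> n"
  shows "((\<lambda>m. e_harm q m / (real m * real (m + n))) has_sum h_harm (Suc q) n / real n) {1..}"
proof -
  have sum: "((\<lambda>m. (\<Sum>j<n. e_harm q m / (real (m + j) * real (m + j + 1))) / real n)
      has_sum (\<Sum>j<n. h_harm q (Suc j) / real (Suc j)) / real n) {1..}"
    by (intro has_sum_divide_const has_sum_sum consecutive) simp
  have summand: "(\<Sum>j<n. e_harm q m / (real (m + j) * real (m + j + 1))) / real n =
      e_harm q m / (real m * real (m + n))" if "m \<in> {1..}" for m
  proof -
    have "(\<Sum>j<n. e_harm q m / (real (m + j) * real (m + j + 1))) =
        e_harm q m * (\<Sum>j<n. 1 / (real (m + j) * real (m + j + 1)))"
      by (simp add: sum_distrib_left)
    also have "\<dots> = e_harm q m * (real n / (real m * real (m + n)))"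
      using that by (subst sum_consecutive_recip) auto
    finally show ?thesis
      using n by simp
  qed
  have total: "(\<Sum>j<n. h_harm q (Suc j) / real (Suc j)) = h_harm (Suc q) n"
    by (simp add: sum.atLeast1_atMost_eq)
  show ?thesis
    using sum unfolding total by (rule has_sum_cong[THEN iffD1, rotated]) (rule summand)
qed

text \<open>In the induction step the double sum over 1 <= i < m is summed over m first, where it
  telescopes, leaving the previous lemma at level q.\<close>

lemma has_sum_e_harm_div_consecutive:
  "((\<lambda>m. e_harm q m / (real (m + j) * real (m + j + 1)))
    has_sum h_harm q (Suc j) / real (Suc j)) {1..}"
proof (induction q arbitrary: j)
  case 0
  have "{0<..} = {1::nat..}"
    by auto
  then show ?case
    using has_sum_telescoping_tail[of j 0] by simp
next
  case (Suc q)
  define F where "F = (\<lambda>(i, m). e_harm q i / real i / (real (m + j) * real (m + j + 1)))"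
  have inner: "((\<lambda>m. F (i, m)) has_sum e_harm q i / (real i * real (i + Suc j))) {i<..}" for i
    using has_sum_cmult_right[OF has_sum_telescoping_tail, of "e_harm q i / real i" j i]
    by (simp add: F_def)
  have "(F has_sum h_harm (Suc q) (Suc j) / real (Suc j)) (Sigma {1..} (\<lambda>i. {i<..}))"
    by (rule has_sum_Sigma_nonneg[OF _ inner has_sum_e_harm_div_mult_add_of_consecutive[OF Suc.IH]])
      (auto simp: F_def e_harm_nonneg)
  also have "?this \<longleftrightarrow> ((\<lambda>(m, i). F (i, m)) has_sum h_harm (Suc q) (Suc j) / real (Suc j))
      (Sigma {1..} (\<lambda>m. {1..<m}))"
    by (rule has_sum_reindex_bij_witness[where i = prod.swap and j = prod.swap]) auto
  finally show ?case
  proof (rule has_sum_SigmaD)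
    fix m :: nat
    show "((\<lambda>i. case (m, i) of (m, i) \<Rightarrow> F (i, m)) has_sum
        e_harm (Suc q) m / (real (m + j) * real (m + j + 1))) {1..<m}"
      by (intro has_sum_finiteI) (simp_all add: F_def sum_divide_distrib)
  qed
qed

lemma has_sum_e_harm_div_mult_add:
  "1 \<le> n \<Longrightarrow> ((\<lambda>m. e_harm q m / (real m * real (m + n))) has_sum h_harm (Suc q) n / real n) {1..}"
  by (rule has_sum_e_harm_div_mult_add_of_consecutive[OF has_sum_e_harm_div_consecutive])

lemma has_sum_mzv_ones:
  assumes "2 \<le> s"
  shows "((\<lambda>n. e_harm r n / real n ^ s) has_sum mzv (replicate r 1 @ [s])) {1..}"
proof -
  have "(\<lambda>n. e_harm r n / real n ^ s) summable_on {1..}"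
  proof (rule summable_on_comparison_test)
    show "(\<lambda>n. 2 * (e_harm r n / (real n * real (n + 1)))) summable_on {1..}"
      using has_sum_e_harm_div_mult_add[of 1 r]
      by (intro summable_on_cmult_right) (auto simp: summable_on_def)
  next
    fix n :: nat assume "n \<in> {1..}"
    then have n: "1 \<le> real n" by simp
    have "real n * real (n + 1) / 2 \<le> real n ^ 2"
      using n by (simp add: power2_eq_square algebra_simps)
    also have "\<dots> \<le> real n ^ s"
      using n assms by (simp add: power_increasing)
    finally have "e_harm r n / real n ^ s \<le> e_harm r n / (real n * real (n + 1) / 2)"
      using n by (intro divide_left_mono e_harm_nonneg) auto
    then show "e_harm r n / real n ^ s \<le> 2 * (e_harm r n / (real n * real (n + 1)))"
      by (simp add: mult.commute)
    show "0 \<le> e_harm r n / real n ^ s"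
      by (simp add: e_harm_nonneg)
  qed
  then have "((\<lambda>n. e_harm r n / real n ^ s)
      has_sum infsum (\<lambda>n. e_harm r n / real n ^ s) {1..}) {1..}"
    by (rule has_sum_infsum)
  moreover from this have "mzv (replicate r 1 @ [s]) = infsum (\<lambda>n. e_harm r n / real n ^ s) {1..}"
    by (rule mzv_ones_eqI)
  ultimately show ?thesis
    by simp
qed

lemma has_sum_G_double:
  assumes "2 \<le> s"
  shows "((\<lambda>(n, m). e_harm r n * e_harm t m / (real n ^ s * real m * real (n + m)))
    has_sum G (Suc s) r (Suc t)) ({1..} \<times> {1..})"
proof -
  define f where "f = (\<lambda>(n, m). e_harm r n * e_harm t m / (real n ^ s * real m * real (n + m)))"
  have "((\<lambda>(n, m). e_harm r n / real n ^ 2 * (e_harm t m / real m ^ 2))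
      has_sum mzv (replicate r 1 @ [2]) * mzv (replicate t 1 @ [2])) ({1..} \<times> {1..})"
    by (intro has_sum_product_nonneg has_sum_mzv_ones) (simp_all add: e_harm_nonneg)
  then have "f summable_on {1..} \<times> {1..}"
  proof (rule summable_on_comparison_test[OF has_sum_imp_summable])
    fix x :: "nat \<times> nat" assume "x \<in> {1..} \<times> {1..}"
    then obtain n m where x: "x = (n, m)" and n: "1 \<le> real n" and m: "1 \<le> real m"
      by auto
    have "real n ^ 2 * real m ^ 2 \<le> real n ^ s * (real m * real (n + m))"
      using n m assms by (intro mult_mono power_increasing) (auto simp: power2_eq_square)
    then have "e_harm r n * e_harm t m / (real n ^ s * real m * real (n + m))
        \<le> e_harm r n * e_harm t m / (real n ^ 2 * real m ^ 2)"
      using n m by (intro divide_left_mono mult_nonneg_nonneg e_harm_nonneg) (auto simp: mult.assoc)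
    then show "f x \<le> (case x of (n, m) \<Rightarrow> e_harm r n / real n ^ 2 * (e_harm t m / real m ^ 2))"
      by (simp add: f_def x)
    show "0 \<le> f x"
      by (simp add: f_def x e_harm_nonneg)
  qed
  then have "(f has_sum infsum f ({1..} \<times> {1..})) ({1..} \<times> {1..})"
    by (rule has_sum_infsum)
  then have "((\<lambda>n. e_harm r n * h_harm (Suc t) n / real n ^ Suc s)
      has_sum infsum f ({1..} \<times> {1..})) {1..}"
  proof (rule has_sum_SigmaD)
    fix n :: nat assume "n \<in> {1..}"
    then have "((\<lambda>m. e_harm r n / real n ^ s * (e_harm t m / (real m * real (m + n))))
        has_sum e_harm r n / real n ^ s * (h_harm (Suc t) n / real n)) {1..}"
      by (intro has_sum_cmult_right has_sum_e_harm_div_mult_add) simp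
    then show "((\<lambda>m. f (n, m)) has_sum e_harm r n * h_harm (Suc t) n / real n ^ Suc s) {1..}"
      by (simp add: f_def add.commute mult_ac)
  qed
  then have "G (Suc s) r (Suc t) = infsum f ({1..} \<times> {1..})"
    by (rule G_eqI)
  with \<open>f summable_on {1..} \<times> {1..}\<close> show ?thesis
    unfolding f_def by (simp add: summable_iff_has_sum_infsum[symmetric])
qed

lemma alternating_sum_recip_powers:
  fixes x y :: real
  assumes "x \<noteq> 0" "y \<noteq> 0" "x + y \<noteq> 0"
  shows "(\<Sum>a\<le>k. (-1) ^ (k - a) / (x ^ (a + 2) * y ^ (k - a + 2))) =
    1 / (x ^ (k + 2) * y * (x + y)) + (-1) ^ k / (y ^ (k + 2) * x * (x + y))"
proof (induction k)
  case 0
  with assms show ?case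
    by (simp add: divide_simps)
next
  case (Suc k)
  have "(\<Sum>a\<le>Suc k. (-1) ^ (Suc k - a) / (x ^ (a + 2) * y ^ (Suc k - a + 2))) =
      - (\<Sum>a\<le>k. (-1) ^ (k - a) / (x ^ (a + 2) * y ^ (k - a + 2))) / y
      + 1 / (x ^ (Suc k + 2) * y ^ 2)"
    by (simp add: sum_divide_distrib Suc_diff_le mult_ac power2_eq_square flip: sum_negf)
  also have "\<dots> = 1 / (x ^ (Suc k + 2) * y * (x + y))
      + (-1) ^ Suc k / (y ^ (Suc k + 2) * x * (x + y))"
    unfolding Suc.IH using assms
    by (simp add: divide_simps power_add) (simp add: algebra_simps power2_eq_square power3_eq_cube)
  finally show ?case .
qed

lemma has_sum_G_alternating:
  "((\<lambda>(n, m). e_harm r n * e_harm t m *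
      (1 / (real n ^ (k + 2) * real m * real (n + m))
        + (-1) ^ k / (real m ^ (k + 2) * real n * real (n + m))))
    has_sum G (k + 3) r (Suc t) + (-1) ^ k * G (k + 3) t (Suc r)) ({1..} \<times> {1..})"
proof -
  have "((\<lambda>(n, m). e_harm r n * e_harm t m / (real n ^ (k + 2) * real m * real (n + m)))
      has_sum G (k + 3) r (Suc t)) ({1..} \<times> {1..})"
    using has_sum_G_double[of "k + 2" r t] by (simp add: numeral_3_eq_3)
  moreover have "((\<lambda>(n, m). e_harm t m * e_harm r n / (real m ^ (k + 2) * real n * real (m + n)))
      has_sum G (k + 3) t (Suc r)) ({1..} \<times> {1..})"
    using has_sum_G_double[of "k + 2" t r] by (subst has_sum_swap) (simp add: numeral_3_eq_3)
  ultimately have "((\<lambda>x. (case x of (n, m) \<Rightarrow>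
        e_harm r n * e_harm t m / (real n ^ (k + 2) * real m * real (n + m)))
      + (-1) ^ k * (case x of (n, m) \<Rightarrow>
        e_harm t m * e_harm r n / (real m ^ (k + 2) * real n * real (m + n))))
      has_sum G (k + 3) r (Suc t) + (-1) ^ k * G (k + 3) t (Suc r)) ({1..} \<times> {1..})"
    by (intro has_sum_add has_sum_cmult_right)
  then show ?thesis
    by (rule has_sum_cong[THEN iffD1, rotated]) (auto simp: distrib_left add.commute mult_ac)
qed

lemma has_sum_mzv_ones_products:
  "((\<lambda>(n, m). e_harm r n * e_harm t m *
      (1 / (real n ^ (k + 2) * real m * real (n + m))
        + (-1) ^ k / (real m ^ (k + 2) * real n * real (n + m))))
    has_sum (\<Sum>a\<le>k. (-1) ^ (k - a) *
      (mzv (replicate r 1 @ [a + 2]) * mzv (replicate t 1 @ [k - a + 2])))) ({1..} \<times> {1..})"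
proof -
  have summand: "(\<Sum>a\<le>k. (-1) ^ (k - a) *
        (e_harm r n / real n ^ (a + 2) * (e_harm t m / real m ^ (k - a + 2)))) =
      e_harm r n * e_harm t m * (1 / (real n ^ (k + 2) * real m * real (n + m))
        + (-1) ^ k / (real m ^ (k + 2) * real n * real (n + m)))"
    if "1 \<le> n" "1 \<le> m" for n m
  proof -
    have "(\<Sum>a\<le>k. (-1) ^ (k - a) *
          (e_harm r n / real n ^ (a + 2) * (e_harm t m / real m ^ (k - a + 2)))) =
        e_harm r n * e_harm t m *
          (\<Sum>a\<le>k. (-1) ^ (k - a) / (real n ^ (a + 2) * real m ^ (k - a + 2)))"
      by (simp add: sum_distrib_left mult_ac)
    with that show ?thesis
      by (subst (asm) alternating_sum_recip_powers) simp_all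
  qed
  have "((\<lambda>x. \<Sum>a\<le>k. (-1) ^ (k - a) *
        (e_harm r (fst x) / real (fst x) ^ (a + 2) *
          (e_harm t (snd x) / real (snd x) ^ (k - a + 2))))
      has_sum (\<Sum>a\<le>k. (-1) ^ (k - a) *
        (mzv (replicate r 1 @ [a + 2]) * mzv (replicate t 1 @ [k - a + 2])))) ({1..} \<times> {1..})"
    by (intro has_sum_sum has_sum_cmult_right has_sum_product_nonneg[unfolded case_prod_beta']
        has_sum_mzv_ones) (simp_all add: e_harm_nonneg)
  then show ?thesis
    by (rule has_sum_cong[THEN iffD1, rotated])
      (simp only: summand case_prod_beta' mem_Times_iff atLeast_iff)
qed

theorem proposition2p4:
  fixes p q k :: nat
  assumes "1 \<le> p" and "1 \<le> q"
  shows "G (k + 3) (p - 1) q + (-1) ^ k * G (k + 3) (q - 1) p =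
    (\<Sum>a\<le>k. (-1) ^ (k - a) * mzv (replicate (p - 1) 1 @ [a + 2])
                              * mzv (replicate (q - 1) 1 @ [(k - a) + 2]))"
proof -
  obtain r t where "p = Suc r" and "q = Suc t"
    using assms by (metis One_nat_def Suc_le_D)
  then show ?thesis
    using has_sum_unique[OF has_sum_G_alternating has_sum_mzv_ones_products]
    by (simp add: mult.assoc)
qed

end
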